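(* Let $c>0$ be a constant. If $mp<c$ and $p\le1/2$, then for every $q\in[0,1]$, \[ \ell_1(\mathrm{Bin}(m,p),\mathrm{Bin}(m,q))\ge\frac{e^{-3c/2}}{2}\min\left(m|p-q|,1\right). \]
   Context: $m$ is a positive integer, $p\in[0,1]$, and $\ell_1(P,Q)=\sum_x|P(x)-Q(x)|$. *)

theory Defs
  imports "HOL-Probability.Probability"
begin

definition l1_dist :: "'a pmf \<Rightarrow> 'a pmf \<Rightarrow> real" where
  "l1_dist P Q = infsum (\<lambda>x. \<bar>pmf P x - pmf Q x\<bar>) UNIV"

end

theory Submission
  imports Defs
begin

text \<open>
  The \<open>\<ell>\<^sub>1\<close> distance is at least the discrepancy at the outcome \<open>0\<close>, which is
  \<open>\<bar>(1 - p)^m - (1 - q)^m\<bar>\<close>. Comparing \<open>1 - q\<close> with \<open>1 - p\<close> shows that this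
  discrepancy is at least \<open>(1 - p)^m\<close> times \<open>min (m\<bar>p - q\<bar>) 1 / 2\<close>: for \<open>q > p\<close>
  the factor \<open>(1 - q)^m / (1 - p)^m\<close> is at most \<open>exp (-m(q - p))\<close>, for \<open>q < p\<close> it is at
  least \<open>1 + m(p - q)\<close> by Bernoulli's inequality. Finally \<open>1 - p \<ge> exp (-3p/2)\<close> for
  \<open>p \<le> 1/2\<close>, so \<open>(1 - p)^m \<ge> exp (-3mp/2) \<ge> exp (-3c/2)\<close>.
\<close>

lemma pmf_summable_on: "pmf P summable_on A"
  using pmf_abs_summable abs_summable_equivalent abs_summable_summable by blast

lemma abs_pmf_diff_le_l1_dist: "\<bar>pmf P x - pmf Q x\<bar> \<le> l1_dist P Q"
proof -
  have "(\<lambda>x. pmf P x + pmf Q x) summable_on UNIV"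
    by (intro summable_on_add pmf_summable_on)
  then have "(\<lambda>x. \<bar>pmf P x - pmf Q x\<bar>) summable_on UNIV"
    by (rule summable_on_comparison_test) (auto simp: abs_le_iff)
  then show ?thesis
    unfolding l1_dist_def
    using infsum_mono_neutral[of "\<lambda>x. \<bar>pmf P x - pmf Q x\<bar>" "{x}" _ UNIV] by simp
qed

lemma exp_neg_three_halves_le_one_minus:
  fixes p :: real
  assumes "0 \<le> p" "p \<le> 1/2"
  shows "exp (-3/2 * p) \<le> 1 - p"
proof -
  have "2 \<le> exp (3/4 :: real)"
    using exp_lower_Taylor_quadratic[of "3/4 :: real"] by (simp add: power2_eq_square)
  then have half: "exp (-3/4 :: real) \<le> 1/2"
    by (simp add: exp_minus field_simps)
  have "exp ((1 - 2*p) *\<^sub>R 0 + (2*p) *\<^sub>R (-3/4)) \<le> (1 - 2*p) * exp 0 + (2*p) * exp (-3/4 :: real)"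
    by (rule convex_onD[OF exp_convex]) (use assms in auto)
  also have "\<dots> \<le> (1 - 2*p) + (2*p) * (1/2)"
    using half assms by (intro add_mono mult_left_mono) auto
  finally show ?thesis by simp
qed

lemma half_min_le_one_minus_exp_neg:
  fixes y :: real
  assumes "0 \<le> y"
  shows "min y 1 / 2 \<le> 1 - exp (-y)"
proof (cases "y \<le> 1")
  case True
  have "exp (-y) = 1 / exp y" by (simp add: exp_minus field_simps)
  also have "\<dots> \<le> 1 / (1 + y)"
    using assms exp_ge_add_one_self[of y] by (intro divide_left_mono) auto
  also have "\<dots> \<le> 1 - y/2"
  proof -
    have "0 \<le> y * (1 - y)"
      using assms True by simp
    then have "1 \<le> (1 - y/2) * (1 + y)"
      by (simp add: algebra_simps)
    then show ?thesis using assms by (simp add: pos_divide_le_eq)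
  qed
  finally show ?thesis using True by simp
next
  case False
  have "exp (-y) \<le> exp (-1)" using False by simp
  also have "\<dots> \<le> 1/2"
    using exp_ge_add_one_self[of "1 :: real"] by (simp add: exp_minus field_simps)
  finally show ?thesis using False by simp
qed

lemma one_minus_power_le_exp:
  fixes p q :: real
  assumes "0 \<le> p" "p \<le> q" "q \<le> 1"
  shows "(1 - q)^m \<le> (1 - p)^m * exp (- (real m * (q - p)))"
proof -
  have "1 - q \<le> (1 - p) * (1 - (q - p))"
    using assms by (simp add: algebra_simps mult_left_mono)
  also have "\<dots> \<le> (1 - p) * exp (- (q - p))"
    using assms exp_ge_add_one_self[of "- (q - p)"] by (intro mult_left_mono) linarith+
  finally have "(1 - q)^m \<le> ((1 - p) * exp (- (q - p)))^m"
    using assms by (intro power_mono) auto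
  then show ?thesis
    by (simp add: power_mult_distrib exp_of_nat_mult[symmetric] minus_mult_right)
qed

lemma one_minus_power_ge_linear:
  fixes p q :: real
  assumes "0 \<le> p" "q \<le> p" "p \<le> 1"
  shows "(1 - p)^m * (1 + real m * (p - q)) \<le> (1 - q)^m"
proof -
  have "(1 - p)^m * (1 + real m * (p - q)) \<le> (1 - p)^m * (1 + (p - q))^m"
    using assms by (intro mult_left_mono Bernoulli_inequality) auto
  also have "\<dots> = ((1 - p) * (1 + (p - q)))^m"
    by (simp add: power_mult_distrib)
  also have "\<dots> \<le> (1 - q)^m"
  proof (rule power_mono)
    have "(1 - p) * (1 + (p - q)) = (1 - q) - p * (p - q)"
      by (simp add: algebra_simps)
    then show "(1 - p) * (1 + (p - q)) \<le> 1 - q"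
      using assms by simp
    show "0 \<le> (1 - p) * (1 + (p - q))"
      using assms by simp
  qed
  finally show ?thesis .
qed

lemma one_minus_power_diff_ge:
  fixes p q :: real
  assumes "0 \<le> p" "p \<le> 1" "q \<le> 1"
  shows "(1 - p)^m * (min (real m * \<bar>p - q\<bar>) 1 / 2) \<le> \<bar>(1 - p)^m - (1 - q)^m\<bar>"
proof (cases "p \<le> q")
  case True
  have "(1 - p)^m * (min (real m * \<bar>p - q\<bar>) 1 / 2)
        \<le> (1 - p)^m * (1 - exp (- (real m * (q - p))))"
    using True assms half_min_le_one_minus_exp_neg[of "real m * (q - p)"]
    by (intro mult_left_mono) auto
  also have "\<dots> \<le> (1 - p)^m - (1 - q)^m"
    using one_minus_power_le_exp[OF assms(1) True assms(3)] by (simp add: algebra_simps)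
  finally show ?thesis by linarith
next
  case False
  have "(1 - p)^m * (min (real m * \<bar>p - q\<bar>) 1 / 2) \<le> (1 - p)^m * (real m * (p - q))"
    using False assms by (intro mult_left_mono) (auto simp: min_def)
  also have "\<dots> \<le> (1 - q)^m - (1 - p)^m"
    using one_minus_power_ge_linear[OF assms(1) _ assms(2), of q] False
    by (simp add: algebra_simps)
  finally show ?thesis by linarith
qed

theorem lemma6:
  fixes c p q :: real and m :: nat
  assumes "c > 0" and "m > 0"
    and "0 \<le> p" and "p \<le> 1" and "0 \<le> q" and "q \<le> 1"
    and "real m * p < c" and "p \<le> 1/2"
  shows "l1_dist (binomial_pmf m p) (binomial_pmf m q)
           \<ge> exp (-3*c/2) / 2 * min (real m * \<bar>p - q\<bar>) 1"
proof -
  have "exp (-3*c/2) \<le> exp (-3/2 * p) ^ m"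
    using assms(7) by (simp add: exp_of_nat_mult[symmetric] mult.commute less_imp_le)
  also have "\<dots> \<le> (1 - p)^m"
    using assms exp_neg_three_halves_le_one_minus[of p] by (intro power_mono) auto
  finally have "exp (-3*c/2) / 2 * min (real m * \<bar>p - q\<bar>) 1
                \<le> (1 - p)^m * (min (real m * \<bar>p - q\<bar>) 1 / 2)"
    by (simp add: mult_right_mono)
  also have "\<dots> \<le> \<bar>(1 - p)^m - (1 - q)^m\<bar>"
    using assms by (intro one_minus_power_diff_ge) auto
  also have "\<dots> = \<bar>pmf (binomial_pmf m p) 0 - pmf (binomial_pmf m q) 0\<bar>"
    using assms by (simp add: pmf_binomial)
  also have "\<dots> \<le> l1_dist (binomial_pmf m p) (binomial_pmf m q)"
    by (rule abs_pmf_diff_le_l1_dist)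
  finally show ?thesis .
qed

end
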